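(* Let $X$ be the Markov process on the star graph $\Gamma$ generated by the operator $(L,D(L))$ described in the context, for some finite stickiness parameter $\eta\ge 0$. Then the vertex $\mathsf v$ is not a trap for $X$, i.e. it is not true that $\mathbf P_{\mathsf v}(\xi_{\mathsf v}>t)=1$ for every $t>0$, where $\xi_{\mathsf v}:=\inf\{s>0: X(s)\neq \mathsf v\}$.
   Context: Star graph: fix $N\ge1$. $\Gamma$ is the quotient of the disjoint union of $N$ copies of $[0,\infty)$ obtained by identifying all the origins; points are written $(i,x)$ with $i\in\{1,\dots,N\}$, $x\ge 0$, and $\mathsf v=(\cdot,0)$ is the unique vertex. $\Gamma$ carries the metric $d((j,x),(i,y))=|x-y|$ if $i=j$ and $x+y$ if $i\ne j$. A function $f:\Gamma\to\mathbb R$ is identified with $(f_1,\dots,f_N)$, $f_i(x)=f(i,x)$, with $f_i(0)=f_j(0)$ for all $i,j$; derivatives are taken edgewise (one-sided at $0$, not required to agree across edges). $C_0(\Gamma)$: continuous functions on $\Gamma$ vanishing at infinity on each edge. $C^2(\Gamma)$: continuous $f$ on $\Gamma$ with each $f_i\in C^2([0,\infty))$. $PC(\Gamma)$: functions whose restrictions $f_i$ are bounded and continuous on $(0,\infty)$ and extend continuously to $[0,\infty)$. Coefficients: $\sigma,b\in PC(\Gamma)$ with $\sigma>\sigma_0$ on $\Gamma$ for some constant $\sigma_0>0$. Operator: $Lf(i,x)=\frac12\sigma_i^2(x)f_i''(x)+b_i(x)f_i'(x)$ for $x>0$; when the limits $\lim_{x\to0}L_if(x)$ coincide for all $i$, $Lf(\mathsf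 v)$ denotes this common value. Fix $\eta\ge0$ and $\rho_1,\dots,\rho_N>0$ with $\sum_i\rho_i=1$, and set $D(L)=\{f\in C^2(\Gamma)\cap C_0(\Gamma): Lf\in C_0(\Gamma),\ \eta Lf(\mathsf v)=\sum_{i=1}^N\rho_if_i'(0)\}$. It is known that $(L,D(L))$ generates a strongly continuous semigroup on $C_0(\Gamma)$ associated with a conservative Markov process $X(t)=(i(t),x(t))$ on $\Gamma$ with continuous paths; $\mathbf P_{\mathsf x},\mathbf E_{\mathsf x}$ denote probability and expectation for the process started at $\mathsf x$. *)

theory Defs
  imports "HOL-Probability.Probability"
begin

text \<open>A point (i,x) of the star graph with N edges is represented canonically as a pair
  of type nat * real: points with x > 0 are (i,x) with 1 <= i <= N, and all origins (i,0) are
  identified with the single vertex, represented by (0,0).\<close>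

definition vtx :: "nat \<times> real" where
  "vtx = (0, 0)"

definition star :: "nat \<Rightarrow> (nat \<times> real) set" where
  "star N = {(i, x). 1 \<le> i \<and> i \<le> N \<and> 0 < x} \<union> {vtx}"

definition spt :: "nat \<Rightarrow> real \<Rightarrow> nat \<times> real" where
  "spt i x = (if x = 0 then vtx else (i, x))"

text \<open>The metric: |x-y| on the same edge, x+y on different edges
  (the vertex (0,0) is handled uniformly by the same formula).\<close>
definition stardist :: "nat \<times> real \<Rightarrow> nat \<times> real \<Rightarrow> real" where
  "stardist p q = (if fst p = fst q then \<bar>snd p - snd q\<bar> else snd p + snd q)"

definition edge :: "(nat \<times> real \<Rightarrow> real) \<Rightarrow> nat \<Rightarrow> real \<Rightarrow> real" where
  "edge f i x = f (spt i x)"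

definition star_continuous :: "nat \<Rightarrow> (nat \<times> real \<Rightarrow> real) \<Rightarrow> bool" where
  "star_continuous N f \<longleftrightarrow>
     (\<forall>p\<in>star N. \<forall>e>0. \<exists>d>0. \<forall>q\<in>star N. stardist q p < d \<longrightarrow> \<bar>f q - f p\<bar> < e)"

definition C0 :: "nat \<Rightarrow> (nat \<times> real \<Rightarrow> real) set" where
  "C0 N = {f. star_continuous N f \<and> (\<forall>i\<in>{1..N}. (edge f i \<longlongrightarrow> 0) at_top)}"

definition d1 :: "(nat \<times> real \<Rightarrow> real) \<Rightarrow> nat \<Rightarrow> real \<Rightarrow> real" where
  "d1 f i x = (THE D. (edge f i has_real_derivative D) (at x within {0..}))"

definition d2 :: "(nat \<times> real \<Rightarrow> real) \<Rightarrow> nat \<Rightarrow> real \<Rightarrow> real" where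
  "d2 f i x = (THE D. (d1 f i has_real_derivative D) (at x within {0..}))"

definition C2 :: "nat \<Rightarrow> (nat \<times> real \<Rightarrow> real) set" where
  "C2 N = {f. star_continuous N f \<and>
     (\<forall>i\<in>{1..N}.
        (\<forall>x\<ge>0. \<exists>D. (edge f i has_real_derivative D) (at x within {0..})) \<and>
        (\<forall>x\<ge>0. \<exists>D. (d1 f i has_real_derivative D) (at x within {0..})) \<and>
        continuous_on {0..} (d2 f i))}"

definition PC :: "nat \<Rightarrow> (nat \<times> real \<Rightarrow> real) set" where
  "PC N = {f. \<forall>i\<in>{1..N}. bounded (edge f i ` {0<..}) \<and> continuous_on {0<..} (edge f i)
              \<and> (\<exists>l. (edge f i \<longlongrightarrow> l) (at_right 0))}"

definition Ledge :: "(nat \<times> real \<Rightarrow> real) \<Rightarrow> (nat \<times> real \<Rightarrow> real) \<Rightarrow> (nat \<times> real \<Rightarrow> real)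
    \<Rightarrow> nat \<Rightarrow> real \<Rightarrow> real" where
  "Ledge \<sigma> b f i x = (1/2) * (edge \<sigma> i x)\<^sup>2 * d2 f i x + edge b i x * d1 f i x"

definition Lop :: "nat \<Rightarrow> (nat \<times> real \<Rightarrow> real) \<Rightarrow> (nat \<times> real \<Rightarrow> real) \<Rightarrow> (nat \<times> real \<Rightarrow> real)
    \<Rightarrow> nat \<times> real \<Rightarrow> real" where
  "Lop N \<sigma> b f p =
     (if p = vtx then (THE l. \<forall>i\<in>{1..N}. (Ledge \<sigma> b f i \<longlongrightarrow> l) (at_right 0))
      else Ledge \<sigma> b f (fst p) (snd p))"

definition DL :: "nat \<Rightarrow> (nat \<times> real \<Rightarrow> real) \<Rightarrow> (nat \<times> real \<Rightarrow> real) \<Rightarrow> real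
    \<Rightarrow> (nat \<Rightarrow> real) \<Rightarrow> (nat \<times> real \<Rightarrow> real) set" where
  "DL N \<sigma> b \<eta> \<rho> = {f. f \<in> C2 N \<and> f \<in> C0 N \<and> (\<lambda>p. Lop N \<sigma> b f p) \<in> C0 N \<and>
      (\<forall>i\<in>{1..N}. (\<exists>l. (Ledge \<sigma> b f i \<longlongrightarrow> l) (at_right 0))) \<and>
      (\<forall>i\<in>{1..N}. \<forall>j\<in>{1..N}. Lim (at_right 0) (Ledge \<sigma> b f i) = Lim (at_right 0) (Ledge \<sigma> b f j)) \<and>
      \<eta> * Lop N \<sigma> b f vtx = (\<Sum>i=1..N. \<rho> i * d1 f i 0)}"

definition supnorm :: "nat \<Rightarrow> (nat \<times> real \<Rightarrow> real) \<Rightarrow> real" where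
  "supnorm N f = (SUP p\<in>star N. \<bar>f p\<bar>)"

definition strongly_cont_semigroup :: "nat \<Rightarrow> (real \<Rightarrow> (nat \<times> real \<Rightarrow> real) \<Rightarrow> (nat \<times> real \<Rightarrow> real)) \<Rightarrow> bool" where
  "strongly_cont_semigroup N T \<longleftrightarrow>
     (\<forall>t\<ge>0. \<forall>f\<in>C0 N. T t f \<in> C0 N) \<and>
     (\<forall>t\<ge>0. \<forall>f\<in>C0 N. \<forall>g\<in>C0 N. \<forall>a::real. \<forall>p\<in>star N.
        T t (\<lambda>q. a * f q + g q) p = a * T t f p + T t g p) \<and>
     (\<forall>t\<ge>0. \<exists>C. \<forall>f\<in>C0 N. supnorm N (T t f) \<le> C * supnorm N f) \<and>
     (\<forall>f\<in>C0 N. \<forall>p\<in>star N. T 0 f p = f p) \<and>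
     (\<forall>s\<ge>0. \<forall>t\<ge>0. \<forall>f\<in>C0 N. \<forall>p\<in>star N. T (s + t) f p = T s (T t f) p) \<and>
     (\<forall>f\<in>C0 N. ((\<lambda>t. supnorm N (\<lambda>p. T t f p - f p)) \<longlongrightarrow> 0) (at_right 0))"

definition generates :: "nat \<Rightarrow> ((nat \<times> real \<Rightarrow> real) \<Rightarrow> (nat \<times> real \<Rightarrow> real))
    \<Rightarrow> (nat \<times> real \<Rightarrow> real) set \<Rightarrow> (real \<Rightarrow> (nat \<times> real \<Rightarrow> real) \<Rightarrow> (nat \<times> real \<Rightarrow> real)) \<Rightarrow> bool" where
  "generates N A D T \<longleftrightarrow> strongly_cont_semigroup N T \<and> D \<subseteq> C0 N \<and>
     (\<forall>f\<in>C0 N. f \<in> D \<longleftrightarrow>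
        (\<exists>g\<in>C0 N. ((\<lambda>t. supnorm N (\<lambda>p. (T t f p - f p) / t - g p)) \<longlongrightarrow> 0) (at_right 0))) \<and>
     (\<forall>f\<in>D. ((\<lambda>t. supnorm N (\<lambda>p. (T t f p - f p) / t - A f p)) \<longlongrightarrow> 0) (at_right 0))"

definition natfilt :: "'w measure \<Rightarrow> (real \<Rightarrow> 'w \<Rightarrow> nat \<times> real) \<Rightarrow> real \<Rightarrow> 'w measure" where
  "natfilt M X s = sigma (space M)
     {X r -` A \<inter> space M | r A. 0 \<le> r \<and> r \<le> s \<and> A \<in> sets borel}"

definition markov_process_of :: "nat \<Rightarrow> (real \<Rightarrow> (nat \<times> real \<Rightarrow> real) \<Rightarrow> (nat \<times> real \<Rightarrow> real))
    \<Rightarrow> (nat \<times> real \<Rightarrow> 'w measure) \<Rightarrow> (real \<Rightarrow> 'w \<Rightarrow> nat \<times> real) \<Rightarrow> bool" where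
  "markov_process_of N T P X \<longleftrightarrow>
     (\<forall>x\<in>star N.
        prob_space (P x) \<and>
        (\<forall>t\<ge>0. X t \<in> measurable (P x) borel) \<and>
        (\<forall>\<omega>\<in>space (P x). \<forall>t\<ge>0. X t \<omega> \<in> star N) \<and>
        (\<forall>\<omega>\<in>space (P x). \<forall>t\<ge>0. \<forall>e>0. \<exists>d>0. \<forall>s\<ge>0.
            \<bar>s - t\<bar> < d \<longrightarrow> stardist (X s \<omega>) (X t \<omega>) < e) \<and>
        (AE \<omega> in P x. X 0 \<omega> = x) \<and>
        (\<forall>t\<ge>0. \<forall>f\<in>C0 N. T t f x = (\<integral>\<omega>. f (X t \<omega>) \<partial>P x)) \<and>
        (\<forall>s\<ge>0. \<forall>t\<ge>0. \<forall>f\<in>C0 N. AE \<omega> in P x.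
            real_cond_exp (P x) (natfilt (P x) X s) (\<lambda>\<omega>. f (X (s + t) \<omega>)) \<omega> = T t f (X s \<omega>)))"

text \<open>First exit time from the vertex: inf {s > 0. X(s) /= v}, in the extended reals
  (so that it is +infinity if the path never leaves v).\<close>
definition exit_vtx :: "(real \<Rightarrow> 'w \<Rightarrow> nat \<times> real) \<Rightarrow> 'w \<Rightarrow> ereal" where
  "exit_vtx X \<omega> = Inf (ereal ` {s. 0 < s \<and> X s \<omega> \<noteq> vtx})"

end

(*
  If the vertex were a trap, the process started at v would stay at v, so
  T_t f (v) = E_v f(X_t) = f(v) for all t > 0 and the generator would satisfy Lf(v) = 0
  for every f in D(L).  This is refuted by an explicit f in D(L) with Lf(v) = 1: on edge i take
  f_i(x) = e^(-x) (1 + (eta + 1) x + c_i x^2).  All f_i'(0) equal eta, so the gluing condition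
  eta Lf(v) = sum_i rho_i f_i'(0) holds as soon as Lf(v) = 1, and c_i is chosen to make
  L_i f(0+) = 1, which is possible because sigma_i(0+) >= sigma_0 > 0.
*)
theory Submission
  imports Defs "HOL-Real_Asymp.Real_Asymp"
begin

definition exp_quad :: "real \<Rightarrow> real \<Rightarrow> real \<Rightarrow> real \<Rightarrow> real" where
  "exp_quad c0 c1 c2 x = exp (-x) * (c0 + c1 * x + c2 * x\<^sup>2)"

lemma exp_quad_0 [simp]: "exp_quad c0 c1 c2 0 = c0"
  by (simp add: exp_quad_def)

lemma exp_quad_has_real_derivative:
  assumes "c0' = c1 - c0" "c1' = 2 * c2 - c1" "c2' = - c2"
  shows "(exp_quad c0 c1 c2 has_real_derivative exp_quad c0' c1' c2' x) (at x within S)"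
  unfolding exp_quad_def assms
  by (rule derivative_eq_intros refl | simp)+ (simp add: algebra_simps power2_eq_square)

lemma continuous_on_exp_quad: "continuous_on S (exp_quad c0 c1 c2)"
  unfolding exp_quad_def by (intro continuous_intros)

lemma exp_quad_tendsto_at_top: "(exp_quad c0 c1 c2 \<longlongrightarrow> 0) at_top"
  unfolding exp_quad_def by real_asymp

lemma tendsto_exp_quad: "(exp_quad c0 c1 c2 \<longlongrightarrow> exp_quad c0 c1 c2 x) (at x within S)"
  unfolding exp_quad_def by (intro tendsto_intros)

lemma at_within_Ici_nontrivial:
  fixes x :: real
  assumes "a \<le> x"
  shows "at x within {a..} \<noteq> bot"
proof (cases "x = a")
  case True
  then show ?thesis by (simp add: at_within_Ici_at_right)
next
  case False
  with assms have "at x within {a..} = at x"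
    by (intro at_within_interior) auto
  then show ?thesis by simp
qed

lemma The_has_real_derivative_Ici:
  assumes "a \<le> x" "(g has_real_derivative D) (at x within {a..})"
  shows "(THE D. (g has_real_derivative D) (at x within {a..})) = D"
  using assms has_field_derivative_unique[OF _ _ at_within_Ici_nontrivial[OF assms(1)]] by blast

lemma continuous_on_Ici_at_rightI:
  fixes g :: "real \<Rightarrow> real"
  assumes "continuous_on {a<..} g" "(g \<longlongrightarrow> g a) (at_right a)"
  shows "continuous_on {a..} g"
  unfolding continuous_on_eq_continuous_within
proof
  fix x assume x: "x \<in> {a..}"
  show "continuous (at x within {a..}) g"
  proof (cases "x = a")
    case True
    then show ?thesis using assms(2) by (simp add: continuous_within at_within_Ici_at_right)
  next
    case False
    with x assms(1) have "isCont g x"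
      using continuous_on_eq_continuous_at[of "{a<..}" g] by auto
    then show ?thesis by (rule continuous_at_imp_continuous_within)
  qed
qed

lemma continuous_on_Ici_tendsto_imp_bounded:
  fixes g :: "real \<Rightarrow> real"
  assumes "continuous_on {a..} g" "(g \<longlongrightarrow> l) at_top"
  shows "bounded (g ` {a..})"
proof -
  obtain M where M: "\<And>x. x \<ge> M \<Longrightarrow> dist (g x) l < 1"
    using tendstoD[OF assms(2) zero_less_one] by (auto simp: eventually_at_top_linorder)
  have "{a..} \<subseteq> {a..max a M} \<union> {M..}" by auto
  then have "g ` {a..} \<subseteq> g ` {a..max a M} \<union> ball l 1"
    using M by (fastforce simp: dist_commute)
  moreover have "compact (g ` {a..max a M})"
    by (intro compact_continuous_image continuous_on_subset[OF assms(1)]) auto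
  ultimately show ?thesis
    by (meson bounded_Un bounded_ball bounded_subset compact_imp_bounded)
qed

lemma tendsto_Bfun_mult_zero:
  fixes f g :: "'a \<Rightarrow> real"
  assumes "Bfun g F" "(f \<longlongrightarrow> 0) F"
  shows "((\<lambda>x. g x * f x) \<longlongrightarrow> 0) F"
  using bounded_bilinear.Bfun_prod_Zfun[OF bounded_bilinear_mult assms(1)] assms(2)
  by (simp add: tendsto_Zfun_iff)

lemma spt_pos [simp]: "0 < x \<Longrightarrow> spt i x = (i, x)"
  by (simp add: spt_def)

lemma edge_0: "edge g i 0 = g vtx"
  by (simp add: edge_def spt_def)

lemma edge_pos: "0 < x \<Longrightarrow> edge g i x = g (i, x)"
  by (simp add: edge_def)

lemma vtx_in_star: "vtx \<in> star N"
  by (simp add: star_def)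

lemma spt_in_star: "i \<in> {1..N} \<Longrightarrow> 0 \<le> x \<Longrightarrow> spt i x \<in> star N"
  by (auto simp: star_def spt_def)

lemma star_cases:
  assumes "p \<in> star N"
  obtains "p = vtx" | i x where "i \<in> {1..N}" "0 < x" "p = (i, x)"
  using assms by (auto simp: star_def)

lemma stardist_spt_spt: "1 \<le> i \<Longrightarrow> 0 \<le> x \<Longrightarrow> 0 \<le> y \<Longrightarrow> stardist (spt i y) (spt i x) = \<bar>y - x\<bar>"
  by (auto simp: stardist_def spt_def vtx_def)

lemma star_eq_UN: "star N = insert vtx (\<Union>i\<in>{1..N}. spt i ` {0..})"
  by (auto simp: star_def spt_def image_iff intro: bexI[of _ "snd _"])

lemma star_continuous_imp_continuous_on_edge:
  assumes "star_continuous N g" "i \<in> {1..N}"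
  shows "continuous_on {0..} (edge g i)"
  unfolding continuous_on_iff
proof (intro ballI allI impI)
  fix x e :: real assume x: "x \<in> {0..}" and e: "0 < e"
  then obtain d where d: "d > 0" "\<forall>q\<in>star N. stardist q (spt i x) < d \<longrightarrow> \<bar>g q - g (spt i x)\<bar> < e"
    using assms spt_in_star unfolding star_continuous_def by (metis atLeast_iff)
  have "dist (edge g i y) (edge g i x) < e" if "y \<in> {0..}" "dist y x < d" for y
    using d(2)[rule_format, OF spt_in_star[OF assms(2)]] that x assms(2)
    by (simp add: stardist_spt_spt edge_def dist_real_def)
  with d(1) show "\<exists>d>0. \<forall>y\<in>{0..}. dist y x < d \<longrightarrow> dist (edge g i y) (edge g i x) < e"
    by blast
qed

lemma continuous_on_edges_imp_star_continuous:
  assumes cont: "\<forall>i\<in>{1..N}. continuous_on {0..} (edge g i)"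
  shows "star_continuous N g"
  unfolding star_continuous_def
proof (intro ballI allI impI)
  fix p and e :: real assume p: "p \<in> star N" and e: "0 < e"
  show "\<exists>d>0. \<forall>q\<in>star N. stardist q p < d \<longrightarrow> \<bar>g q - g p\<bar> < e"
    using p
  proof (cases rule: star_cases)
    case 1
    have "\<forall>i\<in>{1..N}. eventually (\<lambda>y. dist (edge g i y) (g vtx) < e) (at_right 0)"
      using cont e continuous_on_def[of "{0..}"]
      by (metis atLeast_iff at_within_Ici_at_right edge_0 order_refl tendstoD)
    then have "eventually (\<lambda>y. \<forall>i\<in>{1..N}. dist (edge g i y) (g vtx) < e) (at_right 0)"
      by (intro eventually_ball_finite) auto
    then obtain d :: real where d: "0 < d" "\<And>i y. 0 < y \<Longrightarrow> y < d \<Longrightarrow> i \<in> {1..N} \<Longrightarrow> \<bar>g (i, y) - g vtx\<bar> < e"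
      by (auto simp: eventually_at_right_field edge_pos dist_real_def)
    have "\<bar>g q - g p\<bar> < e" if "q \<in> star N" "stardist q p < d" for q
      using that(1) by (cases rule: star_cases) (use 1 e d that(2) in \<open>auto simp: stardist_def vtx_def\<close>)
    with d(1) show ?thesis by blast
  next
    case (2 i x)
    obtain d where d: "0 < d" "\<And>y. 0 \<le> y \<Longrightarrow> dist y x < d \<Longrightarrow> dist (edge g i y) (edge g i x) < e"
      using cont 2 e unfolding continuous_on_iff by (metis atLeast_iff less_imp_le)
    have "\<bar>g q - g p\<bar> < e" if "q \<in> star N" "stardist q p < min d x" for q
      using that(1)
    proof (cases rule: star_cases)
      case 1
      with 2 that(2) show ?thesis by (simp add: stardist_def vtx_def)
    next
      case (2 j y)
      with \<open>p = (i, x)\<close> \<open>0 < x\<close> that(2) have "j = i" "dist y x < d"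
        by (auto simp: stardist_def dist_real_def split: if_splits)
      with 2 d(2)[of y] \<open>p = (i, x)\<close> \<open>0 < x\<close> show ?thesis
        by (simp add: edge_pos dist_real_def)
    qed
    with d(1) \<open>0 < x\<close> show ?thesis by (metis min_less_iff_conj)
  qed
qed

lemma star_continuous_iff_edges:
  "star_continuous N g \<longleftrightarrow> (\<forall>i\<in>{1..N}. continuous_on {0..} (edge g i))"
  using star_continuous_imp_continuous_on_edge continuous_on_edges_imp_star_continuous by blast

lemma C0_bounded:
  assumes "g \<in> C0 N"
  shows "bounded (g ` star N)"
proof -
  have "bounded (edge g i ` {0..})" if "i \<in> {1..N}" for i
    using assms that star_continuous_iff_edges unfolding C0_def
    by (blast intro: continuous_on_Ici_tendsto_imp_bounded)
  then have "bounded (insert (g vtx) (\<Union>i\<in>{1..N}. edge g i ` {0..}))"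
    by auto
  then show ?thesis
    by (simp add: star_eq_UN image_UN image_image edge_def)
qed

lemma abs_le_supnorm:
  assumes "bounded (g ` star N)" "p \<in> star N"
  shows "\<bar>g p\<bar> \<le> supnorm N g"
proof -
  obtain B where "\<forall>q\<in>star N. \<bar>g q\<bar> \<le> B"
    using assms(1) by (auto simp: bounded_iff)
  then have "bdd_above ((\<lambda>q. \<bar>g q\<bar>) ` star N)"
    by (auto intro: bdd_aboveI2)
  then show ?thesis
    unfolding supnorm_def using assms(2) by (rule cSUP_upper2) simp
qed

lemma generator_eq_0_at_fixed_point:
  assumes gen: "generates N A D T" and "f \<in> D" "A f \<in> C0 N" "p \<in> star N"
    and fixed: "\<forall>t>0. T t f p = f p"
  shows "A f p = 0"
proof -
  have "f \<in> C0 N" "strongly_cont_semigroup N T"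
    and conv: "((\<lambda>t. supnorm N (\<lambda>q. (T t f q - f q) / t - A f q)) \<longlongrightarrow> 0) (at_right 0)"
    using gen \<open>f \<in> D\<close> unfolding generates_def by auto
  have "\<bar>A f p\<bar> \<le> supnorm N (\<lambda>q. (T t f q - f q) / t - A f q)" if "0 < t" for t
  proof -
    have "T t f \<in> C0 N"
      using \<open>strongly_cont_semigroup N T\<close> \<open>f \<in> C0 N\<close> \<open>0 < t\<close>
      unfolding strongly_cont_semigroup_def by simp
    (* supnorm is a conditionally complete SUP, so it dominates the values only of bounded functions *)
    then have "bounded ((\<lambda>q. (1 / t) *\<^sub>R (T t f q - f q) - A f q) ` star N)"
      using \<open>f \<in> C0 N\<close> \<open>A f \<in> C0 N\<close>
      by (intro bounded_minus_comp bounded_scaleR_comp C0_bounded)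
    then have "\<bar>(T t f p - f p) / t - A f p\<bar> \<le> supnorm N (\<lambda>q. (T t f q - f q) / t - A f q)"
      using abs_le_supnorm[OF _ \<open>p \<in> star N\<close>] by simp
    then show ?thesis
      using fixed \<open>0 < t\<close> by simp
  qed
  then have "\<bar>A f p\<bar> \<le> 0"
    by (intro tendsto_le[OF trivial_limit_at_right_real conv tendsto_const])
      (auto intro: eventually_mono[OF eventually_at_right_less])
  then show ?thesis
    by simp
qed

lemma lt_exit_vtx_imp_at_vtx:
  assumes "ereal t < exit_vtx X \<omega>" "0 < t"
  shows "X t \<omega> = vtx"
proof (rule ccontr)
  assume "X t \<omega> \<noteq> vtx"
  with \<open>0 < t\<close> have "exit_vtx X \<omega> \<le> ereal t"
    unfolding exit_vtx_def by (intro INF_lower) simp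
  with assms(1) show False
    by simp
qed

lemma markov_semigroup_fixes_trapped_vtx:
  assumes markov: "markov_process_of N T P X"
    and trap: "\<forall>t>0. AE \<omega> in P vtx. ereal t < exit_vtx X \<omega>"
    and "f \<in> C0 N" "f \<in> borel_measurable borel" "0 < t"
  shows "T t f vtx = f vtx"
proof -
  have "prob_space (P vtx)" "X t \<in> measurable (P vtx) borel"
    and T_eq: "T t f vtx = (\<integral>\<omega>. f (X t \<omega>) \<partial>P vtx)"
    using markov vtx_in_star \<open>f \<in> C0 N\<close> \<open>0 < t\<close> unfolding markov_process_of_def by auto
  have "AE \<omega> in P vtx. f (X t \<omega>) = f vtx"
    using trap \<open>0 < t\<close> by (force elim: AE_mp intro: AE_I2 dest: lt_exit_vtx_imp_at_vtx)
  then have "(\<integral>\<omega>. f (X t \<omega>) \<partial>P vtx) = (\<integral>\<omega>. f vtx \<partial>P vtx)"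
    using \<open>X t \<in> measurable (P vtx) borel\<close> \<open>f \<in> borel_measurable borel\<close>
    by (intro integral_cong_AE) auto
  also have "\<dots> = f vtx"
    using prob_space.prob_space[OF \<open>prob_space (P vtx)\<close>] by simp
  finally show ?thesis
    using T_eq by simp
qed

lemma PC_edge_Bfun_at_top:
  assumes "g \<in> PC N" "i \<in> {1..N}"
  shows "Bfun (edge g i) at_top"
proof -
  have "bounded (edge g i ` {0<..})"
    using assms by (simp add: PC_def)
  then obtain B where "\<forall>x>0. norm (edge g i x) \<le> B"
    by (auto simp: bounded_iff)
  then show ?thesis
    by (intro BfunI[of _ B]) (auto intro: eventually_mono[OF eventually_gt_at_top[of 0]])
qed

lemma edge_Lop: "0 < x \<Longrightarrow> edge (Lop N \<sigma> b f) i x = Ledge \<sigma> b f i x"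
  by (simp add: edge_def Lop_def vtx_def)

lemma Lop_vtx_eqI:
  assumes "1 \<le> N" "\<forall>i\<in>{1..N}. (Ledge \<sigma> b f i \<longlongrightarrow> l) (at_right 0)"
  shows "Lop N \<sigma> b f vtx = l"
proof -
  have "(THE l. \<forall>i\<in>{1..N}. (Ledge \<sigma> b f i \<longlongrightarrow> l) (at_right 0)) = l"
  proof (rule the_equality)
    fix l' assume "\<forall>i\<in>{1..N}. (Ledge \<sigma> b f i \<longlongrightarrow> l') (at_right 0)"
    with assms show "l' = l"
      by (metis atLeastAtMost_iff order_refl tendsto_unique trivial_limit_at_right_real)
  qed (use assms in simp)
  then show ?thesis
    by (simp add: Lop_def)
qed

lemma Lop_in_C0:
  assumes "\<forall>i\<in>{1..N}. continuous_on {0<..} (Ledge \<sigma> b f i)"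
    and "\<forall>i\<in>{1..N}. (Ledge \<sigma> b f i \<longlongrightarrow> Lop N \<sigma> b f vtx) (at_right 0)"
    and "\<forall>i\<in>{1..N}. (Ledge \<sigma> b f i \<longlongrightarrow> 0) at_top"
  shows "Lop N \<sigma> b f \<in> C0 N"
proof -
  have on_pos: "\<forall>\<^sub>F x in F. Ledge \<sigma> b f i x = edge (Lop N \<sigma> b f) i x"
    if "\<forall>\<^sub>F x in F. 0 < x" for F i
    using that by (auto elim: eventually_mono simp: edge_Lop)
  have "continuous_on {0..} (edge (Lop N \<sigma> b f) i)" if "i \<in> {1..N}" for i
  proof (rule continuous_on_Ici_at_rightI)
    show "continuous_on {0<..} (edge (Lop N \<sigma> b f) i)"
    proof (rule continuous_on_eq)
      show "continuous_on {0<..} (Ledge \<sigma> b f i)"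
        using assms(1) that by blast
    qed (simp add: edge_Lop)
    show "(edge (Lop N \<sigma> b f) i \<longlongrightarrow> edge (Lop N \<sigma> b f) i 0) (at_right 0)"
      unfolding edge_0
      by (rule Lim_transform_eventually[OF _ on_pos[OF eventually_at_right_less]])
        (use assms(2) that in blast)
  qed
  moreover have "(edge (Lop N \<sigma> b f) i \<longlongrightarrow> 0) at_top" if "i \<in> {1..N}" for i
    by (rule Lim_transform_eventually[OF _ on_pos[OF eventually_gt_at_top]])
      (use assms(3) that in blast)
  ultimately show ?thesis
    by (simp add: C0_def star_continuous_iff_edges)
qed

lemma d1_d2_eqI:
  assumes f': "\<And>x. 0 \<le> x \<Longrightarrow> (edge f i has_real_derivative f' x) (at x within {0..})"
    and f'': "\<And>x. 0 \<le> x \<Longrightarrow> (f' has_real_derivative f'' x) (at x within {0..})"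
    and "0 \<le> x"
  shows "d1 f i x = f' x" "(d1 f i has_real_derivative f'' x) (at x within {0..})" "d2 f i x = f'' x"
proof -
  have d1_eq: "d1 f i y = f' y" if "0 \<le> y" for y
    unfolding d1_def using that f'[OF that] by (rule The_has_real_derivative_Ici)
  then show "d1 f i x = f' x"
    using \<open>0 \<le> x\<close> .
  show d1_deriv: "(d1 f i has_real_derivative f'' x) (at x within {0..})"
    using f''[OF \<open>0 \<le> x\<close>] unfolding has_field_derivative_def
    by (rule has_derivative_transform[rotated 2]) (use \<open>0 \<le> x\<close> d1_eq in auto)
  show "d2 f i x = f'' x"
    unfolding d2_def using \<open>0 \<le> x\<close> d1_deriv by (rule The_has_real_derivative_Ici)
qed

lemma C2_I:
  assumes f_cont: "star_continuous N f"
    and f': "\<And>i x. i \<in> {1..N} \<Longrightarrow> 0 \<le> x \<Longrightarrow> (edge f i has_real_derivative f' i x) (at x within {0..})"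
    and f'': "\<And>i x. i \<in> {1..N} \<Longrightarrow> 0 \<le> x \<Longrightarrow> (f' i has_real_derivative f'' i x) (at x within {0..})"
    and f''_cont: "\<And>i. i \<in> {1..N} \<Longrightarrow> continuous_on {0..} (f'' i)"
  shows "f \<in> C2 N"
  unfolding C2_def
proof (intro CollectI conjI f_cont ballI allI impI exI)
  fix i and x :: real assume i: "i \<in> {1..N}" and "0 \<le> x"
  show "(edge f i has_real_derivative f' i x) (at x within {0..})"
    using f'[OF i \<open>0 \<le> x\<close>] .
  show "(d1 f i has_real_derivative f'' i x) (at x within {0..})"
    using d1_d2_eqI[OF f'[OF i] f''[OF i] \<open>0 \<le> x\<close>] by blast
next
  fix i assume i: "i \<in> {1..N}"
  show "continuous_on {0..} (d2 f i)"
    using f''_cont[OF i] by (rule continuous_on_eq) (use d1_d2_eqI[OF f'[OF i] f''[OF i]] in simp)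
qed

lemma PC_Ledge_tendsto_at_top:
  assumes "\<sigma> \<in> PC N" "b \<in> PC N" "i \<in> {1..N}" "(f' \<longlongrightarrow> 0) at_top" "(f'' \<longlongrightarrow> 0) at_top"
  shows "((\<lambda>x. 1/2 * (edge \<sigma> i x)\<^sup>2 * f'' x + edge b i x * f' x) \<longlongrightarrow> 0) at_top"
proof -
  have "Bfun (edge \<sigma> i) at_top" "Bfun (edge b i) at_top"
    using assms(1-3) by (auto intro: PC_edge_Bfun_at_top)
  then have "((\<lambda>x. edge \<sigma> i x * (edge \<sigma> i x * (f'' x / 2)) + edge b i x * f' x) \<longlongrightarrow> 0) at_top"
    using assms(4,5) by (intro tendsto_add_zero tendsto_Bfun_mult_zero) (auto intro: tendsto_divide_zero)
  then show ?thesis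
    by (simp add: power2_eq_square algebra_simps)
qed

lemma in_DL_I:
  assumes "1 \<le> N" and \<sigma>: "\<sigma> \<in> PC N" and b: "b \<in> PC N"
    and f_cont: "star_continuous N f"
    and f_top: "\<And>i. i \<in> {1..N} \<Longrightarrow> (edge f i \<longlongrightarrow> 0) at_top"
    and f': "\<And>i x. i \<in> {1..N} \<Longrightarrow> 0 \<le> x \<Longrightarrow> (edge f i has_real_derivative f' i x) (at x within {0..})"
    and f'': "\<And>i x. i \<in> {1..N} \<Longrightarrow> 0 \<le> x \<Longrightarrow> (f' i has_real_derivative f'' i x) (at x within {0..})"
    and f''_cont: "\<And>i. i \<in> {1..N} \<Longrightarrow> continuous_on {0..} (f'' i)"
    and f'_top: "\<And>i. i \<in> {1..N} \<Longrightarrow> (f' i \<longlongrightarrow> 0) at_top"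
    and f''_top: "\<And>i. i \<in> {1..N} \<Longrightarrow> (f'' i \<longlongrightarrow> 0) at_top"
    and L_lim: "\<And>i. i \<in> {1..N} \<Longrightarrow>
      ((\<lambda>x. 1/2 * (edge \<sigma> i x)\<^sup>2 * f'' i x + edge b i x * f' i x) \<longlongrightarrow> l) (at_right 0)"
    and gluing: "\<eta> * l = (\<Sum>i=1..N. \<rho> i * f' i 0)"
  shows "f \<in> DL N \<sigma> b \<eta> \<rho>" "Lop N \<sigma> b f vtx = l"
proof -
  define Lf where "Lf i x = 1/2 * (edge \<sigma> i x)\<^sup>2 * f'' i x + edge b i x * f' i x" for i x
  have d1_f: "d1 f i x = f' i x" and d2_f: "d2 f i x = f'' i x"
    if "i \<in> {1..N}" "0 \<le> x" for i x
    using d1_d2_eqI[OF f'[OF that(1)] f''[OF that(1)] that(2)] by blast+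
  have Ledge_f: "\<forall>\<^sub>F x in F. Lf i x = Ledge \<sigma> b f i x"
    if "i \<in> {1..N}" "\<forall>\<^sub>F x in F. 0 < x" for F i
    using that by (auto elim: eventually_mono simp: Lf_def Ledge_def d1_f d2_f)
  have Ledge_lim: "(Ledge \<sigma> b f i \<longlongrightarrow> l) (at_right 0)" if "i \<in> {1..N}" for i
    using L_lim[OF that] Ledge_f[OF that eventually_at_right_less]
    unfolding Lf_def by (rule Lim_transform_eventually)
  show Lop_vtx: "Lop N \<sigma> b f vtx = l"
    using \<open>1 \<le> N\<close> Ledge_lim by (intro Lop_vtx_eqI) auto
  have f_C0: "f \<in> C0 N"
    using f_cont f_top by (simp add: C0_def)
  have f_C2: "f \<in> C2 N"
    using f_cont f' f'' f''_cont by (rule C2_I)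
  have "Lop N \<sigma> b f \<in> C0 N"
  proof (rule Lop_in_C0, safe)
    fix i assume i: "i \<in> {1..N}"
    have "continuous_on {0..} (f' i)"
      using f'' i by (intro DERIV_continuous_on) auto
    then have "continuous_on {0<..} (Lf i)"
      using \<sigma> b i f''_cont[OF i] unfolding Lf_def PC_def
      by (auto intro!: continuous_intros elim: continuous_on_subset)
    then show "continuous_on {0<..} (Ledge \<sigma> b f i)"
      by (rule continuous_on_eq) (simp add: Lf_def Ledge_def d1_f[OF i] d2_f[OF i])
    show "(Ledge \<sigma> b f i \<longlongrightarrow> Lop N \<sigma> b f vtx) (at_right 0)"
      using Ledge_lim[OF i] Lop_vtx by simp
    have "(Lf i \<longlongrightarrow> 0) at_top"
      unfolding Lf_def[abs_def] using \<sigma> b i f'_top[OF i] f''_top[OF i] by (rule PC_Ledge_tendsto_at_top)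
    then show "(Ledge \<sigma> b f i \<longlongrightarrow> 0) at_top"
      by (rule Lim_transform_eventually[OF _ Ledge_f[OF i eventually_gt_at_top]])
  qed
  moreover have "Lim (at_right 0) (Ledge \<sigma> b f i) = l" if "i \<in> {1..N}" for i
    using Ledge_lim[OF that] by (intro tendsto_Lim) auto
  moreover have "(\<Sum>i=1..N. \<rho> i * d1 f i 0) = (\<Sum>i=1..N. \<rho> i * f' i 0)"
    by (intro sum.cong) (simp_all add: d1_f)
  ultimately show "f \<in> DL N \<sigma> b \<eta> \<rho>"
    using f_C0 f_C2 Ledge_lim gluing Lop_vtx unfolding DL_def by (auto intro: exI[of _ l])
qed

lemma PC_edge_tendsto_Lim:
  assumes "g \<in> PC N" "i \<in> {1..N}"
  shows "(edge g i \<longlongrightarrow> Lim (at_right 0) (edge g i)) (at_right 0)"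
proof -
  obtain l where l: "(edge g i \<longlongrightarrow> l) (at_right 0)"
    using assms unfolding PC_def by blast
  then have "Lim (at_right 0) (edge g i) = l"
    by (intro tendsto_Lim) auto
  with l show ?thesis
    by simp
qed

lemma PC_edge_Lim_ge:
  assumes "g \<in> PC N" "i \<in> {1..N}" "\<forall>p\<in>star N. c < g p"
  shows "c \<le> Lim (at_right 0) (edge g i)"
proof (rule tendsto_lowerbound[OF PC_edge_tendsto_Lim[OF assms(1,2)]])
  show "\<forall>\<^sub>F x in at_right 0. c \<le> edge g i x"
  proof (rule eventually_mono[OF eventually_at_right_less])
    fix x :: real assume "0 < x"
    with assms(2,3) spt_in_star[OF assms(2), of x] show "c \<le> edge g i x"
      by (auto simp: edge_def intro: less_imp_le)
  qed
qed (rule trivial_limit_at_right_real)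

lemma exists_DL_Lop_vtx_eq_1:
  assumes "1 \<le> N" and \<sigma>: "\<sigma> \<in> PC N" and b: "b \<in> PC N"
    and \<sigma>_vtx: "\<forall>i\<in>{1..N}. Lim (at_right 0) (edge \<sigma> i) \<noteq> 0"
    and \<rho>: "(\<Sum>i=1..N. \<rho> i) = 1"
  obtains f where "f \<in> DL N \<sigma> b \<eta> \<rho>" "Lop N \<sigma> b f vtx = 1" "f \<in> borel_measurable borel"
proof -
  define s where "s i = Lim (at_right 0) (edge \<sigma> i)" for i
  define \<beta> where "\<beta> i = Lim (at_right 0) (edge b i)" for i
  (* f_i'(0) = eta and f_i''(0) = 2 c_i - 2 eta - 1, so 1/2 s_i^2 f_i''(0) + beta_i f_i'(0) = 1 *)
  define c where "c i = (1 - \<beta> i * \<eta>) / (s i)\<^sup>2 + \<eta> + 1/2" for i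
  define f where "f p = exp_quad 1 (\<eta> + 1) (c (fst p)) (snd p)" for p
  define f1 where "f1 i = exp_quad \<eta> (2 * c i - \<eta> - 1) (- c i)" for i
  define f2 where "f2 i = exp_quad (2 * c i - 2 * \<eta> - 1) (\<eta> + 1 - 4 * c i) (c i)" for i
  have edge_f: "edge f i = exp_quad 1 (\<eta> + 1) (c i)" for i
    by (auto simp: edge_def f_def spt_def vtx_def)
  have f1: "(edge f i has_real_derivative f1 i x) (at x within S)" for i x S
    unfolding edge_f f1_def by (rule exp_quad_has_real_derivative) simp_all
  have f2: "(f1 i has_real_derivative f2 i x) (at x within S)" for i x S
    unfolding f1_def f2_def by (rule exp_quad_has_real_derivative) simp_all
  have L_vtx: "1/2 * (s i)\<^sup>2 * f2 i 0 + \<beta> i * f1 i 0 = 1" if "i \<in> {1..N}" for i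
    using \<sigma>_vtx that by (simp add: s_def f1_def f2_def c_def field_simps)
  have f_cont: "star_continuous N f"
    by (simp add: star_continuous_iff_edges edge_f continuous_on_exp_quad)
  have L_lim: "((\<lambda>x. 1/2 * (edge \<sigma> i x)\<^sup>2 * f2 i x + edge b i x * f1 i x) \<longlongrightarrow> 1) (at_right 0)"
    if i: "i \<in> {1..N}" for i
  proof -
    have "((\<lambda>x. 1/2 * (edge \<sigma> i x)\<^sup>2 * f2 i x + edge b i x * f1 i x)
        \<longlongrightarrow> 1/2 * (s i)\<^sup>2 * f2 i 0 + \<beta> i * f1 i 0) (at_right 0)"
      unfolding s_def \<beta>_def f1_def f2_def
      using \<sigma> b i by (intro tendsto_intros PC_edge_tendsto_Lim tendsto_exp_quad)
    then show ?thesis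
      by (simp only: L_vtx[OF i])
  qed
  have gluing: "\<eta> * 1 = (\<Sum>i=1..N. \<rho> i * f1 i 0)"
    using \<rho> by (simp add: f1_def flip: sum_distrib_right)
  have "f \<in> DL N \<sigma> b \<eta> \<rho>" "Lop N \<sigma> b f vtx = 1"
    using in_DL_I[OF \<open>1 \<le> N\<close> \<sigma> b f_cont _ f1 f2 _ _ _ L_lim gluing]
    by (simp_all add: edge_f f1_def f2_def exp_quad_tendsto_at_top continuous_on_exp_quad)
  moreover have "continuous_on UNIV f"
  proof -
    have "continuous_on UNIV (\<lambda>p :: nat \<times> real. c (fst p))"
      by (rule continuous_on_compose2[of UNIV c]) (auto intro: continuous_intros)
    then show ?thesis
      unfolding f_def[abs_def] exp_quad_def by (intro continuous_intros)
  qed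
  ultimately show ?thesis
    using that borel_measurable_continuous_onI by blast
qed

theorem proposition3p2:
  fixes N :: nat and \<sigma> b :: "nat \<times> real \<Rightarrow> real" and \<sigma>0 \<eta> :: real and \<rho> :: "nat \<Rightarrow> real"
    and T :: "real \<Rightarrow> (nat \<times> real \<Rightarrow> real) \<Rightarrow> (nat \<times> real \<Rightarrow> real)"
    and P :: "nat \<times> real \<Rightarrow> 'w measure" and X :: "real \<Rightarrow> 'w \<Rightarrow> nat \<times> real"
  assumes "1 \<le> N"
    and "\<sigma> \<in> PC N" and "b \<in> PC N"
    and "0 < \<sigma>0" and "\<forall>p\<in>star N. \<sigma>0 < \<sigma> p"
    and "0 \<le> \<eta>"
    and "\<forall>i\<in>{1..N}. 0 < \<rho> i" and "(\<Sum>i=1..N. \<rho> i) = 1"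
    and "generates N (Lop N \<sigma> b) (DL N \<sigma> b \<eta> \<rho>) T"
    and "markov_process_of N T P X"
  shows "\<not> (\<forall>t>0. AE \<omega> in P vtx. ereal t < exit_vtx X \<omega>)"
proof
  assume trap: "\<forall>t>0. AE \<omega> in P vtx. ereal t < exit_vtx X \<omega>"
  have "Lim (at_right 0) (edge \<sigma> i) \<noteq> 0" if "i \<in> {1..N}" for i
    using PC_edge_Lim_ge[OF assms(2) that assms(5)] \<open>0 < \<sigma>0\<close> by simp
  then obtain f where f: "f \<in> DL N \<sigma> b \<eta> \<rho>" "Lop N \<sigma> b f vtx = 1" "f \<in> borel_measurable borel"
    using exists_DL_Lop_vtx_eq_1[OF assms(1-3) _ assms(8)] by blast
  then have "f \<in> C0 N" "Lop N \<sigma> b f \<in> C0 N"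
    unfolding DL_def by blast+
  then have "\<forall>t>0. T t f vtx = f vtx"
    using markov_semigroup_fixes_trapped_vtx[OF assms(10) trap _ f(3)] by blast
  then have "Lop N \<sigma> b f vtx = 0"
    using generator_eq_0_at_fixed_point[OF assms(9) f(1) \<open>Lop N \<sigma> b f \<in> C0 N\<close> vtx_in_star] by blast
  with f(2) show False
    by simp
qed

end
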